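(* Let $n\ge 3$ and let $v_1<\cdots<v_{n-1}$ be positive integers with $\mathrm{ML}(v_1,\ldots,v_{n-1})=L>\frac1n$. Then $\mathrm{ML}(v_1,\ldots,v_n)\ge\frac1n$ for every positive integer $v_n$ with $v_n\ge v_{n-1}(2v_{n-1}-1)$.
   Context: For a real number $x$, $\Vert x\Vert$ denotes the distance from $x$ to the nearest integer. For positive integers $v_1,\ldots,v_k$, the maximum loneliness is $\mathrm{ML}(v_1,\ldots,v_k)=\max_{t\in\mathbb{R}}\min_{1\le i\le k}\Vert t v_i\Vert$. *)

theory Defs
  imports Complex_Main
begin

definition dist_int :: "real \<Rightarrow> real" where
  "dist_int x = \<bar>x - of_int (round x)\<bar>"

text \<open>Maximum loneliness of the speeds v 1, ..., v k:
  the supremum over all real t of the minimum of dist_int (t * v i), 1 \<le> i \<le> k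
  (this supremum is attained, so it is the maximum of the paper).\<close>
definition max_loneliness :: "nat \<Rightarrow> (nat \<Rightarrow> nat) \<Rightarrow> real" where
  "max_loneliness k v = (SUP t::real. Min ((\<lambda>i. dist_int (t * real (v i))) ` {1..k}))"

end

theory Submission
  imports Defs
begin

text \<open>
  Take t0 with dist_int (t0 * v i) > 1/n for all i < n. For each such i, the times t around t0
  with dist_int (t * v i) \<ge> 1/n form an interval [(k_i + 1/n) / v_i, (k_i + 1 - 1/n) / v_i],
  and the intersection [a, b] of these intervals has its left end from some v_i and its right
  end from some v_j. If i = j its length is (1 - 2/n) / v_i; otherwise b - a is a positive
  fraction with denominator n v_i v_j, hence at least 1 / (n v_i v_j). In both cases the bound
  on v_n gives (b - a) v_n \<ge> 2/n, so as t runs over [a, b] the point t v_n sweeps an interval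
  of length \<ge> 2/n and thus reaches distance \<ge> 1/n from the integers.
\<close>

lemma dist_int_le_abs_diff: "dist_int x \<le> \<bar>x - of_int k\<bar>"
  unfolding dist_int_def by (rule round_diff_minimal)

lemma dist_int_le_half: "dist_int x \<le> 1 / 2"
  using of_int_round_abs_le[of x] unfolding dist_int_def by linarith

lemma dist_int_geI:
  assumes "of_int k + c \<le> x" "x \<le> of_int k + 1 - c"
  shows "c \<le> dist_int x"
proof -
  have "round x \<le> k \<or> k + 1 \<le> round x" by linarith
  then have "real_of_int (round x) \<le> of_int k \<or> of_int k + 1 \<le> real_of_int (round x)"
    by (metis of_int_le_iff of_int_add of_int_1)
  then show ?thesis using assms unfolding dist_int_def by linarith
qed

lemma dist_int_gtD:
  assumes "c < dist_int x"
  shows "of_int \<lfloor>x\<rfloor> + c < x" "x < of_int \<lfloor>x\<rfloor> + 1 - c"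
proof -
  show "of_int \<lfloor>x\<rfloor> + c < x"
    using assms dist_int_le_abs_diff[of x "\<lfloor>x\<rfloor>"] by linarith
  show "x < of_int \<lfloor>x\<rfloor> + 1 - c"
    using assms dist_int_le_abs_diff[of x "\<lfloor>x\<rfloor> + 1"] by linarith
qed

lemma exists_dist_int_ge_in_interval:
  fixes a b c w :: real
  assumes "c \<le> 1 / 2" "0 < w" "a \<le> b" "2 * c \<le> (b - a) * w"
  obtains t where "t \<in> {a..b}" "c \<le> dist_int (t * w)"
proof (cases "c \<le> dist_int (a * w)")
  case True
  then show ?thesis using assms(3) that by auto
next
  case False
  define m where "m = round (a * w)"
  have near: "\<bar>a * w - of_int m\<bar> < c"
    using False unfolding dist_int_def m_def by simp
  \<comment> \<open>t * w is the first point to the right of a * w at distance c from the integers\<close>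
  define t where "t = (of_int m + c) / w"
  have tw: "t * w = of_int m + c"
    using assms(2) unfolding t_def by simp
  have "a * w \<le> t * w" "t * w \<le> b * w"
    using near tw assms(4) by (auto simp: algebra_simps)
  then have "t \<in> {a..b}"
    using assms(2) by simp
  moreover have "c \<le> dist_int (t * w)"
    by (rule dist_int_geI[of m]) (use tw assms(1) in auto)
  ultimately show ?thesis by (rule that)
qed

lemma bdd_above_min_dist_int:
  fixes v :: "nat \<Rightarrow> nat" and k :: nat
  shows "bdd_above (range (\<lambda>t. Min ((\<lambda>i. dist_int (t * real (v i))) ` {1..k})))"
proof (cases "k = 0")
  case True
  then show ?thesis by simp
next
  case False
  have "Min ((\<lambda>i. dist_int (t * real (v i))) ` {1..k}) \<le> 1 / 2" for t
    using False dist_int_le_half by (intro Min_le_iff[THEN iffD2]) auto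
  then show ?thesis by (intro bdd_aboveI[of _ "1 / 2"]) auto
qed

lemma max_loneliness_gtE:
  assumes "1 \<le> k" "c < max_loneliness k v"
  obtains t where "\<forall>i\<in>{1..k}. c < dist_int (t * real (v i))"
proof -
  obtain t where "c < Min ((\<lambda>i. dist_int (t * real (v i))) ` {1..k})"
    using assms(2) less_cSUP_iff[OF _ bdd_above_min_dist_int]
    unfolding max_loneliness_def by blast
  then show ?thesis using assms(1) that by simp
qed

lemma max_loneliness_geI:
  assumes "1 \<le> k" "\<forall>i\<in>{1..k}. c \<le> dist_int (t * real (v i))"
  shows "c \<le> max_loneliness k v"
proof -
  have "c \<le> Min ((\<lambda>i. dist_int (t * real (v i))) ` {1..k})"
    using assms by simp
  also have "\<dots> \<le> max_loneliness k v"
    unfolding max_loneliness_def by (rule cSUP_upper) (use bdd_above_min_dist_int in auto)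
  finally show ?thesis .
qed

lemma lonely_windowE:
  fixes I :: "'a set" and v :: "'a \<Rightarrow> nat"
  assumes "finite I" "I \<noteq> {}" "\<forall>i\<in>I. 0 < v i"
    and "\<forall>i\<in>I. c < dist_int (t0 * real (v i))"
  obtains i j a b where "i \<in> I" "j \<in> I"
    "a = (of_int \<lfloor>t0 * real (v i)\<rfloor> + c) / real (v i)"
    "b = (of_int \<lfloor>t0 * real (v j)\<rfloor> + 1 - c) / real (v j)"
    "a < b" "\<And>t l. t \<in> {a..b} \<Longrightarrow> l \<in> I \<Longrightarrow> c \<le> dist_int (t * real (v l))"
proof -
  define lo where "lo l = (of_int \<lfloor>t0 * real (v l)\<rfloor> + c) / real (v l)" for l
  define hi where "hi l = (of_int \<lfloor>t0 * real (v l)\<rfloor> + 1 - c) / real (v l)" for l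
  have lo_le: "of_int \<lfloor>t0 * real (v l)\<rfloor> + c \<le> t * real (v l)" if "l \<in> I" "lo l \<le> t" for l t
    using that assms(3) by (simp add: lo_def divide_le_eq mult.commute)
  have le_hi: "t * real (v l) \<le> of_int \<lfloor>t0 * real (v l)\<rfloor> + 1 - c" if "l \<in> I" "t \<le> hi l" for l t
    using that assms(3) by (simp add: hi_def le_divide_eq mult.commute)
  have lo_less: "lo l < t0" and less_hi: "t0 < hi l" if "l \<in> I" for l
    using that assms(3,4) dist_int_gtD[of c "t0 * real (v l)"]
    by (simp_all add: lo_def hi_def divide_less_eq less_divide_eq mult.commute)
  have "Max (lo ` I) \<in> lo ` I" "Min (hi ` I) \<in> hi ` I"
    using assms(1,2) by simp_all
  then obtain i j where i: "i \<in> I" "lo i = Max (lo ` I)" and j: "j \<in> I" "hi j = Min (hi ` I)"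
    by (metis imageE)
  show ?thesis
  proof (rule that[OF i(1) j(1) lo_def hi_def])
    show "lo i < hi j"
      using lo_less[OF i(1)] less_hi[OF j(1)] by linarith
    fix t l
    assume "t \<in> {lo i..hi j}" "l \<in> I"
    moreover have "lo l \<le> lo i" "hi j \<le> hi l"
      using i j \<open>l \<in> I\<close> assms(1) by auto
    ultimately show "c \<le> dist_int (t * real (v l))"
      by (intro dist_int_geI[of "\<lfloor>t0 * real (v l)\<rfloor>"] lo_le le_hi) auto
  qed
qed

lemma distinct_mult_le:
  fixes p q V :: nat
  assumes "p \<noteq> q" "p \<le> V" "q \<le> V"
  shows "p * q \<le> V * (V - 1)"
proof (cases "p < q")
  case True
  then show ?thesis using assms mult_le_mono[of p "V - 1" q V] by (simp add: mult.commute)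
next
  case False
  then show ?thesis using assms mult_le_mono[of q "V - 1" p V] by (simp add: mult.commute)
qed

lemma window_length_ge_inverse:
  fixes n p q :: nat and k l :: int
  assumes "0 < n" "0 < p" "0 < q"
    and "(of_int k + 1 / n) / p < (of_int l + 1 - 1 / n) / q"
  shows "1 / (n * p * q) \<le> (of_int l + 1 - 1 / n) / q - (of_int k + 1 / n) / p"
proof -
  define Z where "Z = (int n * (l + 1) - 1) * int p - (int n * k + 1) * int q"
  have diff: "(of_int l + 1 - 1 / n) / q - (of_int k + 1 / n) / p = of_int Z / (n * p * q)"
    using assms(1-3) unfolding Z_def by (simp add: field_simps)
  then have "0 < of_int Z / real (n * p * q)"
    using assms(4) by simp
  moreover have "0 < real (n * p * q)"
    using assms(1-3) by simp
  ultimately have "0 < Z"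
    by (auto simp: zero_less_divide_iff)
  then show ?thesis
    unfolding diff by (simp add: divide_right_mono)
qed

lemma window_length_ge_same_speed:
  fixes n p :: nat and k l :: int
  assumes "3 \<le> n" "0 < p"
    and "(of_int k + 1 / n) / p < (of_int l + 1 - 1 / n) / p"
  shows "1 / (n * p) \<le> (of_int l + 1 - 1 / n) / p - (of_int k + 1 / n) / p"
proof -
  have "k + 1 / n < l + 1 - 1 / n"
    using assms(2,3) by (simp add: divide_less_cancel)
  moreover have "0 < 1 / real n"
    using assms(1) by simp
  ultimately have "k \<le> l"
    by linarith
  have "1 / n \<le> 1 - 2 / n"
    using assms(1) by (simp add: field_simps)
  then have "1 / n / p \<le> (of_int (l - k) + 1 - 2 / n) / p"
    using \<open>k \<le> l\<close> by (intro divide_right_mono) auto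
  also have "\<dots> = (of_int l + 1 - 1 / n) / p - (of_int k + 1 / n) / p"
    using assms(1,2) by (simp add: field_simps)
  finally show ?thesis
    by simp
qed

text \<open>The bound on w is what both cases need: w \<ge> 2 V for equal speeds and
  w \<ge> 2 V (V - 1) for distinct ones.\<close>

lemma window_length_mult_ge:
  fixes n p q V w :: nat and k l :: int
  assumes "3 \<le> n" "0 < p" "0 < q" "p \<le> V" "q \<le> V" "2 \<le> V"
    and "real V * (2 * real V - 1) \<le> real w"
    and "(of_int k + 1 / n) / p < (of_int l + 1 - 1 / n) / q"
  shows "2 / n \<le> ((of_int l + 1 - 1 / n) / q - (of_int k + 1 / n) / p) * w"
proof (cases "p = q")
  case True
  have diff: "1 / (n * p) \<le> (of_int l + 1 - 1 / n) / q - (of_int k + 1 / n) / p"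
    using window_length_ge_same_speed[OF assms(1,2)] assms(8) True by simp
  have "real V * 3 \<le> real V * (2 * real V - 1)"
    using assms(6) by (intro mult_left_mono) auto
  then have w: "2 * real p \<le> w"
    using assms(4,7) by linarith
  have "2 / n = 1 / (n * p) * (2 * real p)"
    using assms(2) by simp
  also have "\<dots> \<le> ((of_int l + 1 - 1 / n) / q - (of_int k + 1 / n) / p) * w"
    using assms(8) by (intro mult_mono[OF diff w]) simp_all
  finally show ?thesis .
next
  case False
  have "p * q \<le> V * (V - 1)"
    using False assms(4,5) by (rule distinct_mult_le)
  then have "real (p * q) \<le> real (V * (V - 1))"
    by (simp only: of_nat_le_iff)
  also have "\<dots> = real V * (real V - 1)"
    using assms(6) by (simp add: of_nat_diff)
  finally have "2 * real (p * q) \<le> real V * (2 * real V - 1) - real V"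
    by (simp add: algebra_simps)
  then have w: "2 * real (p * q) \<le> w"
    using assms(7) by linarith
  have diff: "1 / (n * p * q) \<le> (of_int l + 1 - 1 / n) / q - (of_int k + 1 / n) / p"
    using assms(1) by (intro window_length_ge_inverse[OF _ assms(2,3,8)]) simp
  have "2 / n = 1 / (n * p * q) * (2 * real (p * q))"
    using assms(2,3) by simp
  also have "\<dots> \<le> ((of_int l + 1 - 1 / n) / q - (of_int k + 1 / n) / p) * w"
    using assms(8) by (intro mult_mono[OF diff w]) simp_all
  finally show ?thesis .
qed

lemma lonely_time_extends:
  fixes I :: "'a set" and v :: "'a \<Rightarrow> nat" and n V w :: nat
  assumes "3 \<le> n" "finite I" "I \<noteq> {}" "\<forall>i\<in>I. 0 < v i \<and> v i \<le> V" "2 \<le> V"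
    and "real V * (2 * real V - 1) \<le> real w"
    and "\<forall>i\<in>I. 1 / n < dist_int (t0 * real (v i))"
  obtains t where "\<forall>i\<in>I. 1 / n \<le> dist_int (t * real (v i))" "1 / n \<le> dist_int (t * real w)"
proof -
  have pos: "\<forall>i\<in>I. 0 < v i"
    using assms(4) by simp
  obtain i j a b where ij: "i \<in> I" "j \<in> I"
    and a: "a = (of_int \<lfloor>t0 * real (v i)\<rfloor> + 1 / n) / real (v i)"
    and b: "b = (of_int \<lfloor>t0 * real (v j)\<rfloor> + 1 - 1 / n) / real (v j)"
    and "a < b" and window: "\<And>t l. t \<in> {a..b} \<Longrightarrow> l \<in> I \<Longrightarrow> 1 / n \<le> dist_int (t * real (v l))"
    using lonely_windowE[OF assms(2,3) pos assms(7)] by metis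
  have "0 < real V * (2 * real V - 1)"
    using assms(5) by (intro mult_pos_pos) auto
  then have "0 < real w"
    using assms(6) by linarith
  moreover have "2 / n \<le> (b - a) * real w"
    unfolding a b
    by (rule window_length_mult_ge[where V = V])
      (use ij assms(1,4,5,6) \<open>a < b\<close>[unfolded a b] in auto)
  ultimately obtain t where "t \<in> {a..b}" "1 / n \<le> dist_int (t * real w)"
    using exists_dist_int_ge_in_interval[of "1 / n" "real w" a b] \<open>a < b\<close> assms(1) by auto
  then show ?thesis
    using window that by blast
qed

theorem lemma8p4:
  fixes n :: nat and v :: "nat \<Rightarrow> nat" and L :: real
  assumes "n \<ge> 3"
    and "\<forall>i\<in>{1..n-1}. v i > 0"
    and "\<forall>i j. 1 \<le> i \<and> i < j \<and> j \<le> n - 1 \<longrightarrow> v i < v j"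
    and "max_loneliness (n - 1) v = L"
    and "L > 1 / real n"
    and "v n > 0"
    and "real (v n) \<ge> real (v (n - 1)) * (2 * real (v (n - 1)) - 1)"
  shows "max_loneliness n v \<ge> 1 / real n"
proof -
  have "1 \<le> n - 1" "1 / n < max_loneliness (n - 1) v"
    using assms(1,4,5) by auto
  then obtain t0 where t0: "\<forall>i\<in>{1..n-1}. 1 / n < dist_int (t0 * real (v i))"
    by (rule max_loneliness_gtE)
  have speeds: "\<forall>i\<in>{1..n-1}. 0 < v i \<and> v i \<le> v (n - 1)"
  proof
    fix i
    assume "i \<in> {1..n-1}"
    then show "0 < v i \<and> v i \<le> v (n - 1)"
      using assms(2) assms(3)[rule_format, of i "n - 1"] by (cases "i = n - 1") auto
  qed
  have "0 < v 1" "v 1 < v (n - 1)"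
    using assms(1-3) by auto
  then have "2 \<le> v (n - 1)"
    by linarith
  moreover have "{1..n-1} \<noteq> {}"
    using assms(1) by simp
  ultimately obtain t where "\<forall>i\<in>{1..n-1}. 1 / n \<le> dist_int (t * real (v i))"
    "1 / n \<le> dist_int (t * real (v n))"
    using lonely_time_extends[OF assms(1) finite_atLeastAtMost _ speeds _ assms(7) t0] by metis
  moreover have "{1..n} = insert n {1..n-1}"
    using assms(1) by auto
  ultimately show ?thesis
    using assms(1) by (intro max_loneliness_geI) auto
qed

end
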